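(* Let $(G,\precsim)$ be a compatible quasi-ordered abelian group and $H$ a $\precsim$-convex subgroup of $G$. Then for all $g_1,g_2\in G$ with $g_1-g_2\notin H$ and $g_1\precsim g_2$, and all $h_1,h_2\in H$, we have $g_1+h_1\precsim g_2+h_2$. Consequently the relation on $G/H$ defined by $g+H\precsim h+H\Leftrightarrow g-h\in H\vee(g-h\notin H\wedge g\precsim h)$ is a well-defined total quasi-order on $G/H$; moreover $(G/H,\precsim)$ is again a compatible quasi-ordered abelian group, and the canonical projection $G\to G/H$ is a homomorphism of quasi-ordered groups.
   Context: A compatible quasi-ordered abelian group is an abelian group $G$ with a total quasi-order $\precsim$ (reflexive, transitive, any two elements comparable) such that, writing $a\sim b$ for $a\precsim b\wedge b\precsim a$: $(Q_1)$ $x\sim0\Rightarrow x=0$; $(Q_2)$ $x\precsim y\wedge y\not\sim z\Rightarrow x+z\precsim y+z$, for all $x,y,z$. $S$ is $\precsim$-convex if $s,t\in S$, $s\precsim a\precsim t$ imply $a\in S$. A homomorphism of quasi-ordered groups is a group homomorphism $\phi$ with $g_1\precsim g_2\Rightarrow\phi(g_1)\precsim\phi(g_2)$. *)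

theory Defs
  imports "HOL-Algebra.Algebra"
begin

text \<open>Abelian groups are HOL-Algebra commutative groups (written multiplicatively:
  the paper's x + y is x \<otimes> y, 0 is \<one>, -y is inv y).\<close>

definition total_quasi_order_on :: "'a set \<Rightarrow> ('a \<Rightarrow> 'a \<Rightarrow> bool) \<Rightarrow> bool" where
  "total_quasi_order_on A qle \<longleftrightarrow>
     (\<forall>x\<in>A. qle x x) \<and>
     (\<forall>x\<in>A. \<forall>y\<in>A. \<forall>z\<in>A. qle x y \<longrightarrow> qle y z \<longrightarrow> qle x z) \<and>
     (\<forall>x\<in>A. \<forall>y\<in>A. qle x y \<or> qle y x)"

definition qo_equiv :: "('a \<Rightarrow> 'a \<Rightarrow> bool) \<Rightarrow> 'a \<Rightarrow> 'a \<Rightarrow> bool" where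
  "qo_equiv qle x y \<longleftrightarrow> qle x y \<and> qle y x"

definition cqo_group :: "('a, 'm) monoid_scheme \<Rightarrow> ('a \<Rightarrow> 'a \<Rightarrow> bool) \<Rightarrow> bool" where
  "cqo_group G qle \<longleftrightarrow>
     comm_group G \<and>
     total_quasi_order_on (carrier G) qle \<and>
     (\<forall>x\<in>carrier G. qo_equiv qle x \<one>\<^bsub>G\<^esub> \<longrightarrow> x = \<one>\<^bsub>G\<^esub>) \<and>
     (\<forall>x\<in>carrier G. \<forall>y\<in>carrier G. \<forall>z\<in>carrier G.
        qle x y \<longrightarrow> \<not> qo_equiv qle y z \<longrightarrow> qle (x \<otimes>\<^bsub>G\<^esub> z) (y \<otimes>\<^bsub>G\<^esub> z))"

definition qo_convex :: "('a, 'm) monoid_scheme \<Rightarrow> ('a \<Rightarrow> 'a \<Rightarrow> bool) \<Rightarrow> 'a set \<Rightarrow> bool" where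
  "qo_convex G qle S \<longleftrightarrow>
     (\<forall>s\<in>S. \<forall>t\<in>S. \<forall>a\<in>carrier G. qle s a \<longrightarrow> qle a t \<longrightarrow> a \<in> S)"

definition qo_hom :: "('a, 'm) monoid_scheme \<Rightarrow> ('a \<Rightarrow> 'a \<Rightarrow> bool) \<Rightarrow>
                      ('b, 'n) monoid_scheme \<Rightarrow> ('b \<Rightarrow> 'b \<Rightarrow> bool) \<Rightarrow> ('a \<Rightarrow> 'b) \<Rightarrow> bool" where
  "qo_hom G qleG K qleK \<phi> \<longleftrightarrow>
     \<phi> \<in> hom G K \<and> (\<forall>g1\<in>carrier G. \<forall>g2\<in>carrier G. qleG g1 g2 \<longrightarrow> qleK (\<phi> g1) (\<phi> g2))"

definition quot_le :: "('a, 'm) monoid_scheme \<Rightarrow> ('a \<Rightarrow> 'a \<Rightarrow> bool) \<Rightarrow> 'a set \<Rightarrow> 'a set \<Rightarrow> 'a set \<Rightarrow> bool" where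
  "quot_le G qle H A B \<longleftrightarrow>
     (\<exists>g\<in>carrier G. \<exists>h\<in>carrier G. A = H #>\<^bsub>G\<^esub> g \<and> B = H #>\<^bsub>G\<^esub> h \<and>
        (g \<otimes>\<^bsub>G\<^esub> inv\<^bsub>G\<^esub> h \<in> H \<or> (g \<otimes>\<^bsub>G\<^esub> inv\<^bsub>G\<^esub> h \<notin> H \<and> qle g h)))"

end

theory Submission
  imports Defs
begin

text \<open>If x \<precsim> y lie in different cosets of the convex subgroup H, then x \<precsim> y k and
  x k \<precsim> y for every k \<in> H. For x \<precsim> y k one argues by contradiction: translating by
  y\<inverse> or by (y k)\<inverse>, which (Q2) and its strict contrapositive permit unless
  y \<sim> y\<inverse> resp. y \<sim> (y k)\<inverse>, squeezes a translate of x between two elements of H, so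
  convexity puts x y\<inverse> into H; in the remaining case y \<sim> y\<inverse> \<sim> (y k)\<inverse> one gets
  y \<precsim> y k directly. Hence the relation on G/H does not depend on representatives, and
  (Q1), (Q2) and totality pass from G to G/H.\<close>

lemma qo_equiv_sym: "qo_equiv r x y \<longleftrightarrow> qo_equiv r y x"
  by (auto simp: qo_equiv_def)

locale cqo_comm_group =
  fixes G (structure) and qle :: "'a \<Rightarrow> 'a \<Rightarrow> bool" (infix "\<precsim>" 50)
  assumes cqo_group: "cqo_group G (\<precsim>)"

sublocale cqo_comm_group \<subseteq> comm_group G
  using cqo_group by (simp add: cqo_group_def)

context cqo_comm_group
begin

lemma qle_refl: "x \<in> carrier G \<Longrightarrow> x \<precsim> x"
  using cqo_group unfolding cqo_group_def total_quasi_order_on_def by blast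

lemma qle_trans: "\<lbrakk>x \<precsim> y; y \<precsim> z; x \<in> carrier G; y \<in> carrier G; z \<in> carrier G\<rbrakk> \<Longrightarrow> x \<precsim> z"
  using cqo_group unfolding cqo_group_def total_quasi_order_on_def by blast

lemma qle_total: "\<lbrakk>x \<in> carrier G; y \<in> carrier G\<rbrakk> \<Longrightarrow> x \<precsim> y \<or> y \<precsim> x"
  using cqo_group unfolding cqo_group_def total_quasi_order_on_def by blast

lemma qo_equiv_one_imp_eq: "\<lbrakk>x \<in> carrier G; qo_equiv (\<precsim>) x \<one>\<rbrakk> \<Longrightarrow> x = \<one>"
  using cqo_group unfolding cqo_group_def by blast

lemma qle_mult_right:
  "\<lbrakk>x \<precsim> y; \<not> qo_equiv (\<precsim>) y z; x \<in> carrier G; y \<in> carrier G; z \<in> carrier G\<rbrakk>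
    \<Longrightarrow> x \<otimes> z \<precsim> y \<otimes> z"
  using cqo_group unfolding cqo_group_def by blast

lemma not_qle_mult_right:
  assumes "\<not> y \<precsim> x" and "\<not> qo_equiv (\<precsim>) (x \<otimes> z) (inv z)"
    and "x \<in> carrier G" "y \<in> carrier G" "z \<in> carrier G"
  shows "\<not> y \<otimes> z \<precsim> x \<otimes> z"
proof
  assume "y \<otimes> z \<precsim> x \<otimes> z"
  then have "y \<otimes> z \<otimes> inv z \<precsim> x \<otimes> z \<otimes> inv z"
    using assms qle_mult_right[of "y \<otimes> z" "x \<otimes> z" "inv z"] by simp
  with assms show False by (simp add: m_assoc)
qed

end

locale cqo_convex_subgroup = cqo_comm_group +
  fixes H :: "'a set"
  assumes subgroup_H: "subgroup H G" and convex_H: "qo_convex G (\<precsim>) H"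

sublocale cqo_convex_subgroup \<subseteq> H: subgroup H G
  by (rule subgroup_H)

context cqo_convex_subgroup
begin

lemma convexD: "\<lbrakk>s \<precsim> a; a \<precsim> t; s \<in> H; t \<in> H; a \<in> carrier G\<rbrakk> \<Longrightarrow> a \<in> H"
  using convex_H unfolding qo_convex_def by blast

lemma mult_mem_iff: "\<lbrakk>a \<in> carrier G; k \<in> H\<rbrakk> \<Longrightarrow> a \<otimes> k \<in> H \<longleftrightarrow> a \<in> H"
proof
  assume a: "a \<in> carrier G" and k: "k \<in> H" and "a \<otimes> k \<in> H"
  then have "a \<otimes> k \<otimes> inv k \<in> H" by blast
  with a k show "a \<in> H" by (simp add: m_assoc)
qed blast

lemma not_qo_equiv_mem: "\<lbrakk>a \<notin> H; h \<in> H; a \<in> carrier G\<rbrakk> \<Longrightarrow> \<not> qo_equiv (\<precsim>) a h"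
  unfolding qo_equiv_def using convexD by blast

lemma qle_mem_iff_qle_mem:
  "\<lbrakk>a \<notin> H; h \<in> H; h' \<in> H; a \<in> carrier G\<rbrakk> \<Longrightarrow> a \<precsim> h \<longleftrightarrow> a \<precsim> h'"
  using convexD qle_total H.mem_carrier by blast

lemma qle_mult_mem_of_qo_equiv_inv:
  assumes y: "y \<in> carrier G" "y \<notin> H" and k: "k \<in> H"
    and equivs: "qo_equiv (\<precsim>) y (inv y)" "qo_equiv (\<precsim>) y (inv (y \<otimes> k))"
  shows "y \<precsim> y \<otimes> k"
proof -
  define w where "w = inv y"
  have kc: "k \<in> carrier G" and wc: "w \<in> carrier G"
    using k y by (auto simp: w_def)
  have w_notin: "w \<notin> H"
  proof
    assume "w \<in> H"
    then have "inv w \<in> H" by blast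
    with y show False by (simp add: w_def)
  qed
  have "inv (y \<otimes> k) = w \<otimes> inv k"
    using y kc by (simp add: w_def inv_mult m_comm)
  then have "w \<otimes> inv k \<precsim> w"
    using equivs qle_trans[of "w \<otimes> inv k" y w] y wc kc by (auto simp: qo_equiv_def w_def)
  then have "w \<otimes> inv k \<otimes> k \<precsim> w \<otimes> k"
    using not_qo_equiv_mem[OF w_notin k] wc kc by (intro qle_mult_right) auto
  then have "w \<precsim> w \<otimes> k"
    using wc kc by (simp add: m_assoc)
  moreover have "w \<otimes> k \<precsim> y \<otimes> k"
    using equivs not_qo_equiv_mem[OF y(2) k] y wc kc
    by (intro qle_mult_right) (auto simp: qo_equiv_def w_def)
  moreover have "y \<precsim> w"
    using equivs by (simp add: qo_equiv_def w_def)
  ultimately show ?thesis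
    using qle_trans y wc kc by (meson m_closed)
qed

lemma mult_mem_of_translates_between:
  assumes "x \<precsim> y" "\<not> x \<precsim> u"
    and "\<not> qo_equiv (\<precsim>) y z" "\<not> qo_equiv (\<precsim>) (u \<otimes> z) (inv z)"
    and "u \<otimes> z \<in> H" "y \<otimes> z \<in> H"
    and "x \<in> carrier G" "y \<in> carrier G" "u \<in> carrier G" "z \<in> carrier G"
  shows "x \<otimes> z \<in> H"
proof (rule convexD)
  show "x \<otimes> z \<precsim> y \<otimes> z"
    using assms by (intro qle_mult_right)
  have "\<not> x \<otimes> z \<precsim> u \<otimes> z"
    using assms by (intro not_qle_mult_right)
  then show "u \<otimes> z \<precsim> x \<otimes> z"
    using qle_total assms by blast
qed (use assms in auto)

lemma qle_mult_mem_right: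
  assumes "x \<precsim> y" "x \<otimes> inv y \<notin> H" "k \<in> H" "x \<in> carrier G" "y \<in> carrier G"
  shows "x \<precsim> y \<otimes> k"
proof (rule ccontr)
  assume strict: "\<not> x \<precsim> y \<otimes> k"
  have kc: "k \<in> carrier G" using assms(3) by (rule H.mem_carrier)
  consider "y \<in> H" | "y \<notin> H" "\<not> qo_equiv (\<precsim>) y (inv y)"
    | "y \<notin> H" "\<not> qo_equiv (\<precsim>) y (inv (y \<otimes> k))"
    | "y \<notin> H" "qo_equiv (\<precsim>) y (inv y)" "qo_equiv (\<precsim>) y (inv (y \<otimes> k))"
    by blast
  then show False
  proof cases
    case 1
    then have "x \<notin> H" using assms by blast
    then show False
      using strict assms 1 qle_mem_iff_qle_mem[of x y "y \<otimes> k"] by blast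
  next
    case 2
    have "y \<otimes> k \<otimes> inv y = k" using assms kc by (simp add: m_ac)
    then have "x \<otimes> inv y \<in> H"
      using 2 assms strict not_qo_equiv_mem[of y k] kc
      by (intro mult_mem_of_translates_between[of x y "y \<otimes> k"]) (auto simp: qo_equiv_sym)
    then show False using assms by blast
  next
    case 3
    have "y \<otimes> k \<noteq> \<one>" using 3 assms mult_mem_iff by force
    then have "\<not> qo_equiv (\<precsim>) (y \<otimes> k \<otimes> inv (y \<otimes> k)) (inv (inv (y \<otimes> k)))"
      using assms kc qo_equiv_one_imp_eq by (auto simp: qo_equiv_sym)
    moreover have "y \<otimes> inv (y \<otimes> k) = inv k"
      using assms kc by (simp add: inv_mult m_assoc[symmetric])
    ultimately have "x \<otimes> inv (y \<otimes> k) \<in> H"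
      using 3 assms strict kc
      by (intro mult_mem_of_translates_between[of x y "y \<otimes> k"]) auto
    moreover have "x \<otimes> inv (y \<otimes> k) = x \<otimes> inv y \<otimes> inv k"
      using assms kc by (simp add: inv_mult m_ac)
    ultimately show False using assms mult_mem_iff by simp
  next
    case 4
    then have "y \<precsim> y \<otimes> k" using assms by (intro qle_mult_mem_of_qo_equiv_inv)
    then show False using strict assms kc qle_trans by blast
  qed
qed

lemma qle_mult_mem_left:
  assumes "x \<precsim> y" "x \<otimes> inv y \<notin> H" "k \<in> H" "x \<in> carrier G" "y \<in> carrier G"
  shows "x \<otimes> k \<precsim> y"
proof (cases "y \<in> H")
  case False
  have kc: "k \<in> carrier G" using assms(3) by (rule H.mem_carrier)
  have "y \<otimes> inv k \<notin> H" using False assms mult_mem_iff by blast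
  then have "x \<otimes> k \<precsim> y \<otimes> inv k \<otimes> k"
    using qle_mult_mem_right[of x y "inv k"] not_qo_equiv_mem assms kc
    by (intro qle_mult_right) auto
  then show ?thesis using assms kc by (simp add: m_assoc)
next
  case True
  show ?thesis
  proof (rule ccontr)
    assume strict: "\<not> x \<otimes> k \<precsim> y"
    have kc: "k \<in> carrier G" and x_notin: "x \<notin> H"
      using True assms H.mem_carrier by auto
    have "x \<otimes> k \<notin> H" using x_notin mult_mem_iff assms kc by blast
    then have "\<not> x \<otimes> k \<precsim> k"
      using strict qle_mem_iff_qle_mem[of "x \<otimes> k" y k] True assms kc by blast
    then have "k \<precsim> x \<otimes> k" using qle_total assms kc by blast
    moreover have "x \<otimes> k \<precsim> \<one> \<otimes> k"
    proof (cases "k = \<one>")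
      case True
      then show ?thesis using strict assms by simp
    next
      case False
      have "x \<precsim> \<one>" using qle_mem_iff_qle_mem[of x y \<one>] x_notin True assms H.one_closed by blast
      with False show ?thesis using qo_equiv_one_imp_eq assms kc
        by (intro qle_mult_right) (auto simp: qo_equiv_sym)
    qed
    ultimately have "x \<otimes> k \<in> H" using convexD assms kc by auto
    then show False using x_notin mult_mem_iff assms by blast
  qed
qed

lemma qle_mult_mem:
  assumes "x \<precsim> y" "x \<otimes> inv y \<notin> H" "h1 \<in> H" "h2 \<in> H" "x \<in> carrier G" "y \<in> carrier G"
  shows "x \<otimes> h1 \<precsim> y \<otimes> h2"
proof (rule qle_mult_mem_right)
  have "x \<otimes> h1 \<otimes> inv y = x \<otimes> inv y \<otimes> h1" using assms by (simp add: m_ac)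
  then show "x \<otimes> h1 \<otimes> inv y \<notin> H" using assms mult_mem_iff by simp
qed (use assms qle_mult_mem_left in auto)

text \<open>The paper's relation on representatives; its conjunct g \<otimes> inv h \<notin> H is redundant.\<close>

definition mod_qle :: "'a \<Rightarrow> 'a \<Rightarrow> bool" where
  "mod_qle g h \<longleftrightarrow> g \<otimes> inv h \<in> H \<or> g \<precsim> h"

lemma mod_qle_mult_mem:
  assumes "mod_qle g h" "u \<in> H" "v \<in> H" "g \<in> carrier G" "h \<in> carrier G"
  shows "mod_qle (g \<otimes> u) (h \<otimes> v)"
proof (cases "g \<otimes> inv h \<in> H")
  case True
  have "g \<otimes> u \<otimes> inv (h \<otimes> v) = g \<otimes> inv h \<otimes> (u \<otimes> inv v)"
    using assms H.mem_carrier by (simp add: inv_mult m_ac)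
  with True assms show ?thesis by (simp add: mod_qle_def)
next
  case False
  then show ?thesis using assms qle_mult_mem by (simp add: mod_qle_def)
qed

lemma rcos_eqE:
  assumes "H #> g = H #> g'" "g \<in> carrier G" "g' \<in> carrier G"
  obtains u where "u \<in> H" "g = g' \<otimes> u"
proof -
  have "g \<in> H #> g'" using assms rcos_self subgroup_H by metis
  then obtain u where "u \<in> H" "g = u \<otimes> g'" by (auto simp: r_coset_def)
  with assms that show ?thesis using H.mem_carrier m_comm by metis
qed

lemma quot_le_rcos_iff:
  assumes "g \<in> carrier G" "h \<in> carrier G"
  shows "quot_le G (\<precsim>) H (H #> g) (H #> h) \<longleftrightarrow> mod_qle g h"
proof
  assume "quot_le G (\<precsim>) H (H #> g) (H #> h)"
  then obtain g' h' where "g' \<in> carrier G" "h' \<in> carrier G" "mod_qle g' h'"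
    and "H #> g = H #> g'" "H #> h = H #> h'"
    by (auto simp: quot_le_def mod_qle_def)
  with assms show "mod_qle g h"
    by (metis rcos_eqE mod_qle_mult_mem)
next
  assume "mod_qle g h"
  with assms show "quot_le G (\<precsim>) H (H #> g) (H #> h)"
    by (auto simp: quot_le_def mod_qle_def)
qed

lemma mod_qle_refl: "g \<in> carrier G \<Longrightarrow> mod_qle g g"
  by (simp add: mod_qle_def qle_refl)

lemma mod_qle_total: "\<lbrakk>g \<in> carrier G; h \<in> carrier G\<rbrakk> \<Longrightarrow> mod_qle g h \<or> mod_qle h g"
  using qle_total by (auto simp: mod_qle_def)

lemma mult_inv_mem_sym:
  assumes "a \<otimes> inv b \<in> H" "a \<in> carrier G" "b \<in> carrier G"
  shows "b \<otimes> inv a \<in> H"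
proof -
  have "inv (a \<otimes> inv b) = b \<otimes> inv a"
    using assms by (simp add: inv_mult m_comm)
  with assms(1) show ?thesis using H.m_inv_closed by metis
qed

lemma mod_qle_trans:
  assumes "mod_qle g h" "mod_qle h c" "g \<in> carrier G" "h \<in> carrier G" "c \<in> carrier G"
  shows "mod_qle g c"
proof -
  have shift: "b \<otimes> (a \<otimes> inv b) = a" if "a \<in> carrier G" "b \<in> carrier G" for a b
    using that by (simp add: m_lcomm[of b a])
  consider "g \<otimes> inv h \<in> H" | "h \<otimes> inv c \<in> H" | "g \<precsim> h" "h \<precsim> c"
    using assms unfolding mod_qle_def by blast
  then show ?thesis
  proof cases
    case 1
    then show ?thesis
      using mod_qle_mult_mem[OF assms(2) 1 H.one_closed] shift[of g h] assms by simp
  next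
    case 2
    then have "c \<otimes> inv h \<in> H" using assms mult_inv_mem_sym by blast
    from mod_qle_mult_mem[OF assms(1) H.one_closed this] show ?thesis
      using shift[of c h] assms by simp
  next
    case 3
    then show ?thesis using assms qle_trans unfolding mod_qle_def by blast
  qed
qed

lemma mem_of_mod_qle_equiv_one:
  assumes "mod_qle g \<one>" "mod_qle \<one> g" "g \<in> carrier G"
  shows "g \<in> H"
proof (rule ccontr)
  assume g_notin: "g \<notin> H"
  then have "inv g \<notin> H" using assms by (metis H.m_inv_closed inv_inv)
  with g_notin assms have "qo_equiv (\<precsim>) g \<one>" by (simp add: mod_qle_def qo_equiv_def)
  with assms g_notin show False using qo_equiv_one_imp_eq H.one_closed by blast
qed

lemma mod_qle_mult_right:
  assumes "mod_qle g h" "\<not> (mod_qle h c \<and> mod_qle c h)"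
    and "g \<in> carrier G" "h \<in> carrier G" "c \<in> carrier G"
  shows "mod_qle (g \<otimes> c) (h \<otimes> c)"
proof -
  have "g \<otimes> c \<otimes> inv (h \<otimes> c) = g \<otimes> (c \<otimes> inv c) \<otimes> inv h"
    using assms by (simp only: inv_mult_group m_assoc inv_closed m_closed)
  then have "g \<otimes> c \<otimes> inv (h \<otimes> c) = g \<otimes> inv h"
    using assms by simp
  moreover have "\<not> qo_equiv (\<precsim>) h c"
    using assms(2) by (auto simp: mod_qle_def qo_equiv_def)
  ultimately show ?thesis
    using assms qle_mult_right unfolding mod_qle_def by metis
qed

lemma rcos_representative:
  assumes "A \<in> carrier (G Mod H)"
  obtains g where "g \<in> carrier G" "A = H #> g"
  using assms unfolding carrier_FactGroup by blast

lemma total_quasi_order_quot_le: "total_quasi_order_on (carrier (G Mod H)) (quot_le G (\<precsim>) H)"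
  unfolding total_quasi_order_on_def carrier_FactGroup
  using mod_qle_refl mod_qle_trans mod_qle_total
  by (simp add: quot_le_rcos_iff)

lemma quot_le_equiv_one:
  assumes "A \<in> carrier (G Mod H)" "qo_equiv (quot_le G (\<precsim>) H) A H"
  shows "A = H"
proof -
  obtain g where g: "g \<in> carrier G" "A = H #> g" using assms(1) by (rule rcos_representative)
  have "H #> \<one> = H" using H.subset by (rule coset_mult_one)
  with assms g have "mod_qle g \<one>" "mod_qle \<one> g"
    using quot_le_rcos_iff[of g \<one>] quot_le_rcos_iff[of \<one> g] unfolding qo_equiv_def by auto
  then have "g \<in> H" using g by (intro mem_of_mod_qle_equiv_one)
  with g show ?thesis using coset_join2 subgroup_H by blast
qed

lemma quot_le_mult_right:
  assumes "quot_le G (\<precsim>) H A B" "\<not> qo_equiv (quot_le G (\<precsim>) H) B C"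
    and "A \<in> carrier (G Mod H)" "B \<in> carrier (G Mod H)" "C \<in> carrier (G Mod H)"
  shows "quot_le G (\<precsim>) H (A <#> C) (B <#> C)"
proof -
  obtain g where g: "g \<in> carrier G" "A = H #> g" using assms(3) by (rule rcos_representative)
  obtain h where h: "h \<in> carrier G" "B = H #> h" using assms(4) by (rule rcos_representative)
  obtain c where c: "c \<in> carrier G" "C = H #> c" using assms(5) by (rule rcos_representative)
  have "mod_qle (g \<otimes> c) (h \<otimes> c)"
    using assms(1,2) g h c quot_le_rcos_iff
    by (intro mod_qle_mult_right) (auto simp: qo_equiv_def)
  then show ?thesis
    using g h c quot_le_rcos_iff normal.rcos_sum[OF subgroup_imp_normal[OF subgroup_H]] by simp
qed

lemma cqo_group_quot: "cqo_group (G Mod H) (quot_le G (\<precsim>) H)"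
  unfolding cqo_group_def one_FactGroup mult_FactGroup
  using abelian_FactGroup[OF subgroup_H] total_quasi_order_quot_le
    quot_le_equiv_one quot_le_mult_right
  by blast

lemma qo_hom_rcos: "qo_hom G (\<precsim>) (G Mod H) (quot_le G (\<precsim>) H) (\<lambda>g. H #> g)"
  using normal.r_coset_hom_Mod[OF subgroup_imp_normal[OF subgroup_H]]
  by (simp add: qo_hom_def quot_le_rcos_iff mod_qle_def)

end

theorem mainTheorem9:
  fixes G :: "('a, 'm) monoid_scheme" and qle :: "'a \<Rightarrow> 'a \<Rightarrow> bool" and H :: "'a set"
  assumes "cqo_group G qle"
    and "subgroup H G"
    and "qo_convex G qle H"
  shows "(\<forall>g1\<in>carrier G. \<forall>g2\<in>carrier G. \<forall>h1\<in>H. \<forall>h2\<in>H.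
            g1 \<otimes>\<^bsub>G\<^esub> inv\<^bsub>G\<^esub> g2 \<notin> H \<longrightarrow> qle g1 g2 \<longrightarrow>
            qle (g1 \<otimes>\<^bsub>G\<^esub> h1) (g2 \<otimes>\<^bsub>G\<^esub> h2))
      \<and> (\<forall>g\<in>carrier G. \<forall>h\<in>carrier G.
            quot_le G qle H (H #>\<^bsub>G\<^esub> g) (H #>\<^bsub>G\<^esub> h) \<longleftrightarrow>
              (g \<otimes>\<^bsub>G\<^esub> inv\<^bsub>G\<^esub> h \<in> H \<or> (g \<otimes>\<^bsub>G\<^esub> inv\<^bsub>G\<^esub> h \<notin> H \<and> qle g h)))
      \<and> total_quasi_order_on (carrier (G Mod H)) (quot_le G qle H)
      \<and> cqo_group (G Mod H) (quot_le G qle H)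
      \<and> qo_hom G qle (G Mod H) (quot_le G qle H) (\<lambda>g. H #>\<^bsub>G\<^esub> g)"
proof -
  interpret cqo_convex_subgroup G qle H
    using assms by (simp add: cqo_convex_subgroup_def cqo_comm_group_def cqo_convex_subgroup_axioms_def)
  show ?thesis
    using qle_mult_mem quot_le_rcos_iff total_quasi_order_quot_le cqo_group_quot qo_hom_rcos
    by (auto simp: mod_qle_def)
qed

end
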